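(* Let $d\ge2$. For $R>0$ and $r>0$, $$F_d(R,r)\ll(1+r)\,\kappa_d(R),$$ where $F_d(R,r)$ is the maximal number of points of $\mathbb{Z}^d$ in a spherical cap of size $r$ on the sphere $\{x\in\mathbb{R}^d:|x|=R\}$, and $\kappa_d(R)$ is the maximal number of points of $\mathbb{Z}^d$ in the intersection of this sphere with a hyperplane.
   Context: A spherical cap of size $r$ on the sphere of radius $R$ is the intersection of the sphere with a ball of radius $\approx r$ centered at a point of the sphere. The implied constant is absolute. *)

theory Defs
  imports "HOL-Analysis.Analysis"
begin

definition lattice_pts :: "(real ^ 'n) set" where
  "lattice_pts = {x. \<forall>i. x $ i \<in> \<int>}"

definition sphere_lattice :: "real \<Rightarrow> (real ^ 'n) set" where
  "sphere_lattice R = lattice_pts \<inter> sphere 0 R"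

text \<open>F_d(R,r): maximal number of lattice points in a cap of size r, i.e. the sphere
  intersected with a closed ball of radius r centred at a point of the sphere.\<close>
definition cap_count :: "('n::finite) itself \<Rightarrow> real \<Rightarrow> real \<Rightarrow> nat" where
  "cap_count _ R r = Sup {card (sphere_lattice R \<inter> cball (x :: real ^ 'n) r) | x. x \<in> sphere 0 R}"

definition hyperplane_count :: "('n::finite) itself \<Rightarrow> real \<Rightarrow> nat" where
  "hyperplane_count _ R = Sup {card (sphere_lattice R \<inter> {x :: real ^ 'n. a \<bullet> x = b}) | a b. a \<noteq> 0}"

end

theory Submission
  imports Defs
begin

text \<open>Fix a coordinate \<open>i\<close>. A cap of size \<open>r\<close> around \<open>x\<close> lies in the slab
  \<open>|y\<^sub>i - x\<^sub>i| \<le> r\<close>, which meets at most \<open>2r + 1\<close> of the integer hyperplanes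
  \<open>y\<^sub>i = k\<close>; each of them carries at most \<open>\<kappa>\<^sub>d(R)\<close> lattice points of the sphere.
  Hence the bound holds with \<open>C = 2\<close>, in every dimension.\<close>

lemma finite_lattice_pts_bounded:
  fixes S :: "(real ^ 'n::finite) set"
  assumes "bounded S"
  shows "finite (lattice_pts \<inter> S)"
proof -
  obtain B where B: "\<forall>x\<in>S. norm x \<le> B"
    using assms bounded_iff by blast
  define M where "M = \<lceil>B\<rceil>"
  have "lattice_pts \<inter> S \<subseteq> (\<lambda>z. \<chi> i. of_int (z i)) ` PiE UNIV (\<lambda>_. {-M..M})"
  proof
    fix x assume x: "x \<in> lattice_pts \<inter> S"
    have "\<lfloor>x $ i\<rfloor> \<in> {-M..M}" for i
    proof -
      have "\<bar>x $ i\<bar> \<le> B"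
        using x B component_le_norm_cart[of x i] by auto
      then show ?thesis
        unfolding M_def by (simp add: floor_le_iff le_ceiling_iff abs_le_iff) linarith
    qed
    moreover have "x = (\<chi> i. of_int \<lfloor>x $ i\<rfloor>)"
      using x by (simp add: vec_eq_iff lattice_pts_def)
    ultimately show "x \<in> (\<lambda>z. \<chi> i. of_int (z i)) ` PiE UNIV (\<lambda>_. {-M..M})"
      by (intro image_eqI[of _ _ "\<lambda>i. \<lfloor>x $ i\<rfloor>"]) auto
  qed
  then show ?thesis
    by (rule finite_subset) (intro finite_imageI finite_PiE; simp)
qed

lemma finite_sphere_lattice: "finite (sphere_lattice R :: (real ^ 'n::finite) set)"
  unfolding sphere_lattice_def by (rule finite_lattice_pts_bounded) simp

lemma card_sphere_lattice_hyperplane_le: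
  fixes a :: "real ^ 'n::finite"
  assumes "a \<noteq> 0"
  shows "card (sphere_lattice R \<inter> {x. a \<bullet> x = b}) \<le> hyperplane_count TYPE('n) R"
proof -
  let ?X = "{card (sphere_lattice R \<inter> {x :: real ^ 'n. a \<bullet> x = b}) | a b. a \<noteq> 0}"
  have "bdd_above ?X"
    by (rule bdd_aboveI[of _ "card (sphere_lattice R :: (real ^ 'n) set)"])
       (auto intro!: card_mono finite_sphere_lattice)
  then show ?thesis
    unfolding hyperplane_count_def using assms by (auto intro!: cSup_upper)
qed

lemma card_sphere_lattice_coordinate_slice_le:
  "card (sphere_lattice R \<inter> {y :: real ^ 'n::finite. y $ i = k}) \<le> hyperplane_count TYPE('n) R"
proof -
  have "{y :: real ^ 'n. y $ i = k} = {y. axis i 1 \<bullet> y = k}"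
    by (simp add: inner_axis')
  then show ?thesis
    using card_sphere_lattice_hyperplane_le[of "axis i 1"] by (simp add: axis_eq_0_iff)
qed

lemma card_integers_in_interval_le:
  fixes c r :: real
  assumes "r \<ge> 0"
  shows "real (card {\<lceil>c - r\<rceil>..\<lfloor>c + r\<rfloor>}) \<le> 2 * r + 1"
  using of_int_floor_le[of "c + r"] le_of_int_ceiling[of "c - r"] assms by simp linarith

lemma card_lattice_cball_le_slices:
  fixes S :: "(real ^ 'n::finite) set" and i :: 'n
  assumes "finite S" "S \<subseteq> lattice_pts" "r \<ge> 0"
    and slice: "\<And>k. card (S \<inter> {y. y $ i = k}) \<le> N"
  shows "real (card (S \<inter> cball x r)) \<le> (2 * r + 1) * real N"
proof -
  define K where "K = {\<lceil>x $ i - r\<rceil>..\<lfloor>x $ i + r\<rfloor>}"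
  have "S \<inter> cball x r \<subseteq> (\<Union>k\<in>K. S \<inter> {y. y $ i = of_int k})"
  proof
    fix y assume y: "y \<in> S \<inter> cball x r"
    then have "y $ i \<in> \<int>"
      using assms(2) by (auto simp: lattice_pts_def)
    then obtain k where k: "y $ i = of_int k"
      by (auto elim: Ints_cases)
    have "\<bar>y $ i - x $ i\<bar> \<le> r"
      using y component_le_norm_cart[of "y - x" i] by (auto simp: dist_norm norm_minus_commute)
    then have "k \<in> K"
      unfolding K_def using k by (auto simp: ceiling_le_iff le_floor_iff)
    then show "y \<in> (\<Union>k\<in>K. S \<inter> {y. y $ i = of_int k})"
      using y k by auto
  qed
  then have "card (S \<inter> cball x r) \<le> card (\<Union>k\<in>K. S \<inter> {y. y $ i = of_int k})"
    by (rule card_mono[rotated]) (simp add: assms(1))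
  also have "\<dots> \<le> (\<Sum>k\<in>K. card (S \<inter> {y. y $ i = of_int k}))"
    by (rule card_UN_le) (simp add: K_def)
  also have "\<dots> \<le> card K * N"
    using sum_mono[of K _ "\<lambda>_. N"] slice by simp
  finally have "real (card (S \<inter> cball x r)) \<le> real (card K) * real N"
    by (metis of_nat_le_iff of_nat_mult)
  also have "\<dots> \<le> (2 * r + 1) * real N"
    unfolding K_def using card_integers_in_interval_le[OF \<open>r \<ge> 0\<close>] by (rule mult_right_mono) simp
  finally show ?thesis .
qed

lemma card_sphere_lattice_cball_le:
  fixes x :: "real ^ 'n::finite"
  assumes "r \<ge> 0"
  shows "real (card (sphere_lattice R \<inter> cball x r)) \<le> (2 * r + 1) * real (hyperplane_count TYPE('n) R)"
proof -
  obtain i :: 'n where True by simp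
  show ?thesis
    using card_sphere_lattice_coordinate_slice_le[of R i]
    by (intro card_lattice_cball_le_slices[OF finite_sphere_lattice _ assms])
       (auto simp: sphere_lattice_def)
qed

lemma cap_count_le:
  assumes "r \<ge> 0"
  shows "real (cap_count TYPE('n::finite) R r) \<le> (2 * r + 1) * real (hyperplane_count TYPE('n) R)"
proof -
  let ?X = "{card (sphere_lattice R \<inter> cball (x :: real ^ 'n) r) | x. x \<in> sphere 0 R}"
  define B where "B = (2 * r + 1) * real (hyperplane_count TYPE('n) R)"
  have bound: "c \<le> nat \<lfloor>B\<rfloor>" if c: "c \<in> ?X" for c
  proof -
    obtain x :: "real ^ 'n" where "c = card (sphere_lattice R \<inter> cball x r)"
      using c by blast
    then have "real c \<le> B"
      unfolding B_def using card_sphere_lattice_cball_le[OF assms] by simp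
    then show ?thesis by linarith
  qed
  have "cap_count TYPE('n) R r \<le> nat \<lfloor>B\<rfloor>"
  proof (cases "?X = {}")
    case True
    then show ?thesis unfolding cap_count_def by simp
  next
    case False
    then show ?thesis unfolding cap_count_def using bound by (intro cSup_least) auto
  qed
  moreover have "B \<ge> 0"
    unfolding B_def using assms by simp
  ultimately show ?thesis
    unfolding B_def by linarith
qed

theorem lemma2p2:
  assumes "CARD('n::finite) \<ge> 2"
  shows "\<exists>C>0. \<forall>R>0. \<forall>r>0.
    real (cap_count TYPE('n) R r) \<le> C * (1 + r) * real (hyperplane_count TYPE('n) R)"
proof (intro exI[of _ 2] conjI allI impI)
  fix R r :: real assume "R > 0" "r > 0"
  then have "real (cap_count TYPE('n) R r) \<le> (2 * r + 1) * real (hyperplane_count TYPE('n) R)"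
    by (intro cap_count_le) simp
  also have "\<dots> \<le> 2 * (1 + r) * real (hyperplane_count TYPE('n) R)"
    by (rule mult_right_mono) auto
  finally show "real (cap_count TYPE('n) R r) \<le> 2 * (1 + r) * real (hyperplane_count TYPE('n) R)" .
qed simp

end
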